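(* Let $\alpha,\beta,\gamma$ be partitions with $\alpha_1\le 2$ and let $\Gamma$ be an LR-tableau of type $(\alpha,\beta,\gamma)$; let $x$ be the number of entries $1$ in $\Gamma$. Assume: (1) the number of entries $2$ in $\Gamma$ equals $x$ or $x-1$; (2) every row of $\Gamma$ contains at most one (non-empty) box; (3) if row $j$ contains an entry $2$ and row $i$ contains an entry $1$, then $j>i$. Then there is a bijection between $\mathcal D_\Gamma$ and the set $S_x$ of permutations of $x$ elements.
   Context: For a partition $\lambda$, $\lambda'$ is its conjugate; the diagram of $\lambda$ is drawn with $\lambda'_i$ boxes in row $i$, so the $i$-th row of $\beta\setminus\gamma$ consists of the boxes in columns $\gamma'_i+1,\dots,\beta'_i$. With $\alpha_1\le2$, $\alpha'=(\alpha'_1,\alpha'_2)$. An LR-tableau of type $(\alpha,\beta,\gamma)$ is a filling of $\beta\setminus\gamma$ with $\alpha'_1$ entries $1$ and $\alpha'_2$ entries $2$, weakly increasing along rows, strictly increasing down columns, such that for each $c\ge0$ the number of entries $1$ in columns to the right of column $c$ is at least the number of entries $2$ there. An arc is a pair $(m,n)$, $m>n$ positive integers (source $m$, target $n$); a pole at $n$ is regarded as an arc $(\infty,n)$. An arc diagram of type $(\alpha,\beta,\gamma)$ is a finite multiset of $\alpha'_2$ arcs and $\alpha'_1-\alpha'_2$ poles with, for each $i$, exactly $\beta'_i-\gamma'_i$ members having source or target $i$. It has LR type $\Gamma$ if for each $i$ the number of arcs with source $i$ equals the number of entries $2$ in row $i$ of $\Gamma$; $\mathcal D_\Gamma$ is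 the set of arc diagrams of type $(\alpha,\beta,\gamma)$ of LR type $\Gamma$. *)

theory Defs
  imports Main "HOL-Library.Multiset" "HOL-Library.Extended_Nat" "HOL-Combinatorics.Permutations"
begin

text \<open>Partitions are lists of positive parts in weakly decreasing order.
  The parts are indexed from 1.\<close>

definition partition :: "nat list \<Rightarrow> bool" where
  "partition xs \<longleftrightarrow> sorted_wrt (\<ge>) xs \<and> 0 \<notin> set xs"

definition part :: "nat list \<Rightarrow> nat \<Rightarrow> nat" where
  "part xs j = (if 1 \<le> j \<and> j \<le> length xs then xs ! (j - 1) else 0)"

definition conj :: "nat list \<Rightarrow> nat \<Rightarrow> nat" where
  "conj xs i = (if i = 0 then 0 else length (filter (\<lambda>a. i \<le> a) xs))"

text \<open>Boxes of the skew diagram beta minus gamma: row i has the boxes in columns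
  conj gamma i + 1, ..., conj beta i.  A box is a pair (row, column).\<close>

definition skew_boxes :: "nat list \<Rightarrow> nat list \<Rightarrow> (nat \<times> nat) set" where
  "skew_boxes \<beta> \<gamma> = {(i, c). 1 \<le> i \<and> conj \<gamma> i < c \<and> c \<le> conj \<beta> i}"

definition LR_tableau ::
  "nat list \<Rightarrow> nat list \<Rightarrow> nat list \<Rightarrow> (nat \<times> nat \<Rightarrow> nat) \<Rightarrow> bool" where
  "LR_tableau \<alpha> \<beta> \<gamma> T \<longleftrightarrow>
     (\<forall>i. conj \<gamma> i \<le> conj \<beta> i) \<and>
     (\<forall>b. b \<notin> skew_boxes \<beta> \<gamma> \<longrightarrow> T b = 0) \<and>
     (\<forall>b \<in> skew_boxes \<beta> \<gamma>. T b \<in> {1, 2}) \<and>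
     card {b \<in> skew_boxes \<beta> \<gamma>. T b = 1} = conj \<alpha> 1 \<and>
     card {b \<in> skew_boxes \<beta> \<gamma>. T b = 2} = conj \<alpha> 2 \<and>
     (\<forall>i c c'. (i, c) \<in> skew_boxes \<beta> \<gamma> \<and> (i, c') \<in> skew_boxes \<beta> \<gamma> \<and> c < c'
        \<longrightarrow> T (i, c) \<le> T (i, c')) \<and>
     (\<forall>i i' c. (i, c) \<in> skew_boxes \<beta> \<gamma> \<and> (i', c) \<in> skew_boxes \<beta> \<gamma> \<and> i < i'
        \<longrightarrow> T (i, c) < T (i', c)) \<and>
     (\<forall>c. card {b \<in> skew_boxes \<beta> \<gamma>. c < snd b \<and> T b = 2}
          \<le> card {b \<in> skew_boxes \<beta> \<gamma>. c < snd b \<and> T b = 1})"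

text \<open>Arcs are pairs (source, target) with source > target \<ge> 1; a pole at n is the
  pair (\<infinity>, n).\<close>

definition arc_diagram ::
  "nat list \<Rightarrow> nat list \<Rightarrow> nat list \<Rightarrow> (enat \<times> nat) multiset \<Rightarrow> bool" where
  "arc_diagram \<alpha> \<beta> \<gamma> D \<longleftrightarrow>
     (\<forall>a \<in># D. 1 \<le> snd a \<and> enat (snd a) < fst a) \<and>
     size (filter_mset (\<lambda>a. fst a \<noteq> \<infinity>) D) = conj \<alpha> 2 \<and>
     size (filter_mset (\<lambda>a. fst a = \<infinity>) D) = conj \<alpha> 1 - conj \<alpha> 2 \<and>
     (\<forall>i \<ge> 1. size (filter_mset (\<lambda>a. fst a = enat i \<or> snd a = i) D)
                = conj \<beta> i - conj \<gamma> i)"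

definition has_LR_type ::
  "nat list \<Rightarrow> nat list \<Rightarrow> (nat \<times> nat \<Rightarrow> nat) \<Rightarrow> (enat \<times> nat) multiset \<Rightarrow> bool" where
  "has_LR_type \<beta> \<gamma> T D \<longleftrightarrow>
     (\<forall>i \<ge> 1. size (filter_mset (\<lambda>a. fst a = enat i) D)
              = card {c. (i, c) \<in> skew_boxes \<beta> \<gamma> \<and> T (i, c) = 2})"

definition arc_diagrams_of_type ::
  "nat list \<Rightarrow> nat list \<Rightarrow> nat list \<Rightarrow> (nat \<times> nat \<Rightarrow> nat) \<Rightarrow> (enat \<times> nat) multiset set" where
  "arc_diagrams_of_type \<alpha> \<beta> \<gamma> T = {D. arc_diagram \<alpha> \<beta> \<gamma> D \<and> has_LR_type \<beta> \<gamma> T D}"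

end

theory Submission
  imports Defs "HOL-Library.FuncSet"
begin

text \<open>Since every row of the skew diagram holds at most one box, an arc diagram of LR type
  \<open>\<Gamma>\<close> touches each row holding a 1 or a 2 exactly once, each row holding a 2 as a source.
  As no arc is a loop, every row holding a 1 is the target of exactly one arc, so the diagram
  is the multiset of arcs \<open>(g r, r)\<close> for a map \<open>g\<close> from the \<open>x\<close> rows holding a 1 to the
  sources: the rows holding a 2, together with \<open>\<infinity>\<close> when there is one more 1 than 2.
  The counting conditions force \<open>g\<close> to be a bijection onto this \<open>x\<close>-element set, and
  condition (3) guarantees \<open>g r > r\<close> for every such bijection; there are \<open>x!\<close> of them.\<close>

lemma filter_mset_disj:
  assumes "\<And>p. p \<in># M \<Longrightarrow> \<not> (P p \<and> Q p)"
  shows "filter_mset (\<lambda>p. P p \<or> Q p) M = filter_mset P M + filter_mset Q M"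
  using assms by (induction M) auto

lemma card_Collect_bij_betw:
  assumes "bij_betw g A B"
  shows "card {a \<in> A. P (g a)} = card {b \<in> B. P b}"
proof -
  have "bij_betw g {a \<in> A. P (g a)} {b \<in> B. P b}"
    using assms by (rule bij_betw_Collect) simp
  then show ?thesis by (rule bij_betw_same_card)
qed

definition arcs_to :: "('a \<Rightarrow> 'b) \<Rightarrow> 'a set \<Rightarrow> ('b \<times> 'a) multiset" where
  "arcs_to g A = image_mset (\<lambda>a. (g a, a)) (mset_set A)"

lemma size_filter_arcs_to:
  "finite A \<Longrightarrow> size (filter_mset P (arcs_to g A)) = card {a \<in> A. P (g a, a)}"
  by (simp add: arcs_to_def filter_mset_image_mset)

lemma filter_arcs_to_target:
  assumes "finite A"
  shows "filter_mset (\<lambda>p. snd p = a) (arcs_to g A) = (if a \<in> A then {#(g a, a)#} else {#})"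
proof -
  have "{a' \<in> A. a' = a} = (if a \<in> A then {a} else {})" by auto
  then show ?thesis using assms by (simp add: arcs_to_def filter_mset_image_mset)
qed

lemma arcs_to_restrict: "arcs_to (restrict g A) A = arcs_to g A"
  unfolding arcs_to_def by (cases "finite A") (auto intro: image_mset_cong)

lemma inj_on_arcs_to: "finite A \<Longrightarrow> inj_on (\<lambda>g. arcs_to g A) (extensional A)"
proof (rule inj_onI)
  fix g g' assume fin: "finite A" and ext: "g \<in> extensional A" "g' \<in> extensional A"
    and eq: "arcs_to g A = arcs_to g' A"
  show "g = g'"
  proof (rule extensionalityI[OF ext])
    fix a assume "a \<in> A"
    then have "{#(g a, a)#} = {#(g' a, a)#}"
      using eq filter_arcs_to_target[OF fin, of a g] filter_arcs_to_target[OF fin, of a g'] by simp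
    then show "g a = g' a" by simp
  qed
qed

lemma multiset_eq_by_snd:
  assumes "\<And>a. filter_mset (\<lambda>p. snd p = a) M = filter_mset (\<lambda>p. snd p = a) N"
  shows "M = N"
proof (rule multiset_eqI)
  fix p
  have "count M p = count (filter_mset (\<lambda>q. snd q = snd p) M) p" by simp
  also have "\<dots> = count (filter_mset (\<lambda>q. snd q = snd p) N) p" by (simp only: assms)
  finally show "count M p = count N p" by simp
qed

lemma ex_arcs_to:
  assumes "finite A" and targets: "\<And>a. size (filter_mset (\<lambda>p. snd p = a) D) = (if a \<in> A then 1 else 0)"
  shows "\<exists>g. D = arcs_to g A"
proof -
  have "\<exists>t. filter_mset (\<lambda>p. snd p = a) D = {#(t, a)#}" if "a \<in> A" for a
  proof -
    have "size (filter_mset (\<lambda>p. snd p = a) D) = 1" using targets[of a] \<open>a \<in> A\<close> by simp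
    then obtain q where q: "filter_mset (\<lambda>p. snd p = a) D = {#q#}"
      using size_1_singleton_mset by blast
    then have "q \<in># filter_mset (\<lambda>p. snd p = a) D" by simp
    then obtain t where "q = (t, a)" by (cases q) simp
    with q show ?thesis by blast
  qed
  then have "\<forall>a \<in> A. \<exists>t. filter_mset (\<lambda>p. snd p = a) D = {#(t, a)#}" by blast
  from bchoice[OF this] obtain g where g: "\<forall>a \<in> A. filter_mset (\<lambda>p. snd p = a) D = {#(g a, a)#}"
    by blast
  have "D = arcs_to g A"
  proof (rule multiset_eq_by_snd)
    fix a show "filter_mset (\<lambda>p. snd p = a) D = filter_mset (\<lambda>p. snd p = a) (arcs_to g A)"
    proof (cases "a \<in> A")
      case True
      then show ?thesis using g \<open>finite A\<close> by (simp add: filter_arcs_to_target)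
    next
      case False
      then have "filter_mset (\<lambda>p. snd p = a) D = {#}" using targets[of a] by simp
      with False \<open>finite A\<close> show ?thesis by (simp add: filter_arcs_to_target)
    qed
  qed
  then show ?thesis by blast
qed

lemma card_bijections:
  assumes "finite A" "finite B" "card A = card B"
  shows "card {g \<in> A \<rightarrow>\<^sub>E B. bij_betw g A B} = fact (card A)"
proof -
  obtain k where k: "bij_betw k B A"
    using finite_same_card_bij assms by metis
  then have inj_k: "inj_on k B" and img_k: "k ` B = A" by (auto simp: bij_betw_def)
  define F where "F g = (\<lambda>a. if a \<in> A then k (g a) else a)" for g
  define F' where "F' p = restrict (\<lambda>a. inv_into B k (p a)) A" for p
  have "bij_betw F {g \<in> A \<rightarrow>\<^sub>E B. bij_betw g A B} {p. p permutes A}"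
  proof (rule bij_betw_byWitness[where f' = F'])
    show "\<forall>g \<in> {g \<in> A \<rightarrow>\<^sub>E B. bij_betw g A B}. F' (F g) = g"
    proof safe
      fix g assume g: "g \<in> A \<rightarrow>\<^sub>E B"
      show "F' (F g) = g"
      proof (rule extensionalityI[where A = A])
        show "F' (F g) \<in> extensional A" by (simp add: F'_def)
        show "g \<in> extensional A" using g by (simp add: PiE_def)
        show "F' (F g) a = g a" if "a \<in> A" for a
        proof -
          have "g a \<in> B" using g that by (rule PiE_mem)
          then show ?thesis using that by (simp add: F_def F'_def inv_into_f_f[OF inj_k])
        qed
      qed
    qed
    show "\<forall>p \<in> {p. p permutes A}. F (F' p) = p"
    proof safe
      fix p assume p: "p permutes A"
      show "F (F' p) = p"
      proof
        fix a show "F (F' p) a = p a"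
          using p img_k by (auto simp: F_def F'_def permutes_not_in permutes_in_image f_inv_into_f)
      qed
    qed
    show "F ` {g \<in> A \<rightarrow>\<^sub>E B. bij_betw g A B} \<subseteq> {p. p permutes A}"
    proof safe
      fix g assume "bij_betw g A B"
      then have "bij_betw (k \<circ> g) A A" using k by (rule bij_betw_trans)
      then have "bij_betw (F g) A A" by (rule bij_betw_cong[THEN iffD1, rotated]) (simp add: F_def)
      then show "F g permutes A" by (rule bij_imp_permutes) (simp add: F_def)
    qed
    show "F' ` {p. p permutes A} \<subseteq> {g \<in> A \<rightarrow>\<^sub>E B. bij_betw g A B}"
    proof (rule image_subsetI)
      fix p assume "p \<in> {p. p permutes A}"
      then have "bij_betw (inv_into B k \<circ> p) A B"
        using permutes_imp_bij bij_betw_inv_into[OF k] by (blast intro: bij_betw_trans)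
      then have "bij_betw (F' p) A B"
        by (rule bij_betw_cong[THEN iffD1, rotated]) (simp add: F'_def)
      moreover from this have "F' p \<in> A \<rightarrow>\<^sub>E B"
        by (auto simp: F'_def bij_betw_def restrict_PiE_iff)
      ultimately show "F' p \<in> {g \<in> A \<rightarrow>\<^sub>E B. bij_betw g A B}" by simp
    qed
  qed
  then have "card {g \<in> A \<rightarrow>\<^sub>E B. bij_betw g A B} = card {p. p permutes A}"
    by (rule bij_betw_same_card)
  also have "\<dots> = fact (card A)"
    using \<open>finite A\<close> by (rule card_permutations[OF refl])
  finally show ?thesis .
qed

text \<open>The arc diagrams of LR type \<open>\<Gamma>\<close> when \<open>\<Gamma>\<close> has a single box in each row of
  \<open>R1 \<union> R2\<close> and no other box, filled with 1 on the rows \<open>R1\<close> and with 2 on the rows \<open>R2\<close>.\<close>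

definition row_arc_diagrams :: "nat set \<Rightarrow> nat set \<Rightarrow> (enat \<times> nat) multiset set" where
  "row_arc_diagrams R1 R2 = {D.
     (\<forall>a \<in># D. 1 \<le> snd a \<and> enat (snd a) < fst a) \<and>
     size (filter_mset (\<lambda>a. fst a \<noteq> \<infinity>) D) = card R2 \<and>
     size (filter_mset (\<lambda>a. fst a = \<infinity>) D) = card R1 - card R2 \<and>
     (\<forall>i \<ge> 1. size (filter_mset (\<lambda>a. fst a = enat i \<or> snd a = i) D)
                = (if i \<in> R1 \<union> R2 then 1 else 0)) \<and>
     (\<forall>i \<ge> 1. size (filter_mset (\<lambda>a. fst a = enat i) D) = (if i \<in> R2 then 1 else 0))}"

locale separated_rows =
  fixes R1 R2 :: "nat set"
  assumes finite_R1: "finite R1" and finite_R2: "finite R2"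
    and positive_rows: "0 \<notin> R1 \<union> R2"
    and R1_less_R2: "\<And>r s. r \<in> R1 \<Longrightarrow> s \<in> R2 \<Longrightarrow> r < s"
    and card_R2: "card R2 = card R1 \<or> card R2 + 1 = card R1"
begin

definition sources :: "enat set" where
  "sources = enat ` R2 \<union> (if card R2 < card R1 then {\<infinity>} else {})"

lemma finite_sources: "finite sources"
  using finite_R2 by (simp add: sources_def)

lemma card_enat_R2: "card (enat ` R2) = card R2"
  by (rule card_image) (simp add: inj_on_def)

lemma card_sources: "card sources = card R1"
  using card_R2 finite_R2 by (auto simp: sources_def card_enat_R2 card_insert_if)

lemma R1_R2_disjoint: "R1 \<inter> R2 = {}"
  using R1_less_R2 by blast

lemma enat_in_sources_iff: "enat s \<in> sources \<longleftrightarrow> s \<in> R2"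
  by (auto simp: sources_def)

lemma card_sources_eq_enat:
  "card {t \<in> sources. t = enat i} = (if i \<in> R2 then 1 else 0)"
proof -
  have "{t \<in> sources. t = enat i} = (if i \<in> R2 then {enat i} else {})"
    by (auto simp: sources_def)
  then show ?thesis by simp
qed

lemma arcs_to_in_row_arc_diagrams:
  assumes g: "bij_betw g R1 sources"
  shows "arcs_to g R1 \<in> row_arc_diagrams R1 R2"
proof -
  have count: "size (filter_mset P (arcs_to g R1)) = card {a \<in> R1. P (g a, a)}" for P
    using finite_R1 by (rule size_filter_arcs_to)
  have count_sources: "card {a \<in> R1. P (g a)} = card {t \<in> sources. P t}" for P
    using g by (rule card_Collect_bij_betw)
  have g_in: "g a \<in> sources" if "a \<in> R1" for a
    using g that by (auto simp: bij_betw_def)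
  have valid: "1 \<le> a \<and> enat a < g a" if "a \<in> R1" for a
  proof
    show "1 \<le> a" using that positive_rows by (cases a) auto
    show "enat a < g a"
      using g_in[OF that] that R1_less_R2 by (auto simp: sources_def split: if_splits)
  qed
  have "{t \<in> sources. t \<noteq> \<infinity>} = enat ` R2" by (auto simp: sources_def)
  then have arcs: "size (filter_mset (\<lambda>a. fst a \<noteq> \<infinity>) (arcs_to g R1)) = card R2"
    using count count_sources[of "\<lambda>t. t \<noteq> \<infinity>"] by (simp add: card_enat_R2)
  have "{t \<in> sources. t = \<infinity>} = (if card R2 < card R1 then {\<infinity>} else {})"
    by (auto simp: sources_def)
  then have poles: "size (filter_mset (\<lambda>a. fst a = \<infinity>) (arcs_to g R1)) = card R1 - card R2"
    using count count_sources[of "\<lambda>t. t = \<infinity>"] card_R2 by auto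
  have sources_at: "size (filter_mset (\<lambda>a. fst a = enat i) (arcs_to g R1)) = (if i \<in> R2 then 1 else 0)"
    for i using count count_sources[of "\<lambda>t. t = enat i"] card_sources_eq_enat by simp
  have touching: "size (filter_mset (\<lambda>a. fst a = enat i \<or> snd a = i) (arcs_to g R1))
      = (if i \<in> R1 \<union> R2 then 1 else 0)" for i
  proof (cases "i \<in> R1")
    case True
    then have "i \<notin> R2" using R1_R2_disjoint by blast
    then have "g a \<noteq> enat i" if "a \<in> R1" for a
      using g_in[OF that] by (auto simp: sources_def split: if_splits)
    then have "{a \<in> R1. g a = enat i \<or> a = i} = {i}" using True by auto
    then show ?thesis using True count by simp
  next
    case False
    then have "{a \<in> R1. g a = enat i \<or> a = i} = {a \<in> R1. g a = enat i}" by auto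
    then show ?thesis
      using False count sources_at[unfolded count] by simp
  qed
  show ?thesis
    unfolding row_arc_diagrams_def
    using valid arcs poles sources_at touching finite_R1 by (auto simp: arcs_to_def)
qed

lemma row_arc_diagram_targets:
  assumes "D \<in> row_arc_diagrams R1 R2"
  shows "size (filter_mset (\<lambda>p. snd p = i) D) = (if i \<in> R1 then 1 else 0)"
proof -
  have valid: "\<And>p. p \<in># D \<Longrightarrow> 1 \<le> snd p \<and> enat (snd p) < fst p"
    and touching: "\<And>i. 1 \<le> i \<Longrightarrow> size (filter_mset (\<lambda>p. fst p = enat i \<or> snd p = i) D)
                              = (if i \<in> R1 \<union> R2 then 1 else 0)"
    and sources_at: "\<And>i. 1 \<le> i \<Longrightarrow> size (filter_mset (\<lambda>p. fst p = enat i) D)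
                              = (if i \<in> R2 then 1 else 0)"
    using assms by (auto simp: row_arc_diagrams_def)
  show ?thesis
  proof (cases "i = 0")
    case True
    then have "filter_mset (\<lambda>p. snd p = i) D = {#}" using valid by fastforce
    with True positive_rows show ?thesis by auto
  next
    case False
    then have "1 \<le> i" by simp
    \<comment> \<open>No arc is a loop, so the arcs touching row \<open>i\<close> are those starting there plus those ending there.\<close>
    have "filter_mset (\<lambda>p. fst p = enat i \<or> snd p = i) D
        = filter_mset (\<lambda>p. fst p = enat i) D + filter_mset (\<lambda>p. snd p = i) D"
      by (rule filter_mset_disj) (use valid in force)
    then show ?thesis
      using touching[OF \<open>1 \<le> i\<close>] sources_at[OF \<open>1 \<le> i\<close>] R1_R2_disjoint
      by (cases "i \<in> R1"; cases "i \<in> R2") auto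
  qed
qed

lemma bij_betw_sources_if_arcs_to_in_row_arc_diagrams:
  assumes D: "arcs_to g R1 \<in> row_arc_diagrams R1 R2"
  shows "bij_betw g R1 sources"
proof -
  have count: "size (filter_mset P (arcs_to g R1)) = card {a \<in> R1. P (g a, a)}" for P
    using finite_R1 by (rule size_filter_arcs_to)
  have valid: "enat a < g a" if "a \<in> R1" for a
    using D that finite_R1 by (auto simp: row_arc_diagrams_def arcs_to_def)
  have fibres: "card {a \<in> R1. g a = t} = (if t \<in> sources then 1 else 0)" for t
  proof (cases t)
    case infinity
    then show ?thesis
      using D count[of "\<lambda>p. fst p = \<infinity>"] card_R2 by (auto simp: row_arc_diagrams_def sources_def)
  next
    case (enat s)
    show ?thesis
    proof (cases "s = 0")
      case True
      then have "{a \<in> R1. g a = t} = {}" using valid enat by fastforce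
      moreover have "t \<notin> sources" using True enat positive_rows by (simp add: enat_in_sources_iff)
      ultimately show ?thesis by (metis card.empty)
    next
      case False
      then show ?thesis
        using D count[of "\<lambda>p. fst p = enat s"] enat
        by (auto simp: row_arc_diagrams_def enat_in_sources_iff)
    qed
  qed
  have "g ` R1 = sources"
  proof (rule set_eqI)
    fix t
    have "t \<in> g ` R1 \<longleftrightarrow> card {a \<in> R1. g a = t} \<noteq> 0" using finite_R1 by auto
    then show "t \<in> g ` R1 \<longleftrightarrow> t \<in> sources" using fibres[of t] by simp
  qed
  then show ?thesis
    using card_sources finite_R1 by (simp add: bij_betw_def eq_card_imp_inj_on)
qed

lemma row_arc_diagram_obtains_bijection:
  assumes "D \<in> row_arc_diagrams R1 R2"
  obtains g where "bij_betw g R1 sources" and "D = arcs_to g R1"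
proof -
  obtain g where "D = arcs_to g R1"
    using ex_arcs_to[OF finite_R1 row_arc_diagram_targets[OF assms]] by blast
  with assms show thesis
    using that bij_betw_sources_if_arcs_to_in_row_arc_diagrams by blast
qed

lemma row_arc_diagrams_eq_image:
  "row_arc_diagrams R1 R2 = (\<lambda>g. arcs_to g R1) ` {g \<in> R1 \<rightarrow>\<^sub>E sources. bij_betw g R1 sources}"
proof (intro equalityI subsetI)
  fix D assume "D \<in> row_arc_diagrams R1 R2"
  then obtain g where g: "bij_betw g R1 sources" "D = arcs_to g R1"
    by (rule row_arc_diagram_obtains_bijection)
  then have "restrict g R1 \<in> {g \<in> R1 \<rightarrow>\<^sub>E sources. bij_betw g R1 sources}"
    by (auto simp: bij_betw_def restrict_PiE_iff)
  moreover have "D = arcs_to (restrict g R1) R1" using g by (simp add: arcs_to_restrict)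
  ultimately show "D \<in> (\<lambda>g. arcs_to g R1) ` {g \<in> R1 \<rightarrow>\<^sub>E sources. bij_betw g R1 sources}"
    by blast
qed (auto intro: arcs_to_in_row_arc_diagrams)

lemma card_row_arc_diagrams: "card (row_arc_diagrams R1 R2) = fact (card R1)"
proof -
  have "inj_on (\<lambda>g. arcs_to g R1) {g \<in> R1 \<rightarrow>\<^sub>E sources. bij_betw g R1 sources}"
    using inj_on_arcs_to[OF finite_R1] by (rule inj_on_subset) (auto simp: PiE_def)
  then have "card (row_arc_diagrams R1 R2) = card {g \<in> R1 \<rightarrow>\<^sub>E sources. bij_betw g R1 sources}"
    by (simp add: row_arc_diagrams_eq_image card_image)
  also have "\<dots> = fact (card R1)"
    using card_bijections[OF finite_R1 finite_sources card_sources[symmetric]] .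
  finally show ?thesis .
qed

end

lemma conj_le_length: "conj xs i \<le> length xs"
  by (simp add: conj_def)

lemma conj_eq_0_if_greater_sum_list: "sum_list xs < i \<Longrightarrow> conj xs i = 0"
  using member_le_sum_list[of _ xs] by (fastforce simp: conj_def filter_empty_conv)

lemma finite_skew_boxes: "finite (skew_boxes \<beta> \<gamma>)"
proof -
  have "skew_boxes \<beta> \<gamma> \<subseteq> {..sum_list \<beta>} \<times> {..length \<beta>}"
  proof (clarsimp simp: skew_boxes_def)
    fix i c assume "conj \<gamma> i < c" "c \<le> conj \<beta> i"
    then show "i \<le> sum_list \<beta> \<and> c \<le> length \<beta>"
      using conj_le_length[of \<beta> i] conj_eq_0_if_greater_sum_list[of \<beta> i] by (auto simp: not_le[symmetric])
  qed
  then show ?thesis by (rule finite_subset) simp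
qed

lemma card_skew_boxes_row:
  assumes "1 \<le> i"
  shows "card {c. (i, c) \<in> skew_boxes \<beta> \<gamma>} = conj \<beta> i - conj \<gamma> i"
proof -
  have "{c. (i, c) \<in> skew_boxes \<beta> \<gamma>} = {conj \<gamma> i<..conj \<beta> i}"
    using assms by (auto simp: skew_boxes_def)
  then show ?thesis by simp
qed

lemma inj_on_fst_if_card_rows_le_1:
  assumes "finite S" and rows: "\<And>i. card {c. (i, c) \<in> S} \<le> 1"
  shows "inj_on fst S"
proof (rule inj_onI)
  fix p q assume "p \<in> S" "q \<in> S" "fst p = fst q"
  then obtain i c c' where p: "p = (i, c)" and q: "q = (i, c')" by (metis prod.collapse)
  have "{c. (i, c) \<in> S} \<subseteq> snd ` S" by force
  then have "finite {c. (i, c) \<in> S}" by (rule finite_subset) (simp add: \<open>finite S\<close>)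
  then have "c = c'"
    using rows[of i] \<open>p \<in> S\<close> \<open>q \<in> S\<close> p q by (auto simp: card_le_Suc0_iff_eq)
  then show "p = q" using p q by simp
qed

lemma card_row_if_inj_on_fst:
  assumes "inj_on fst S"
  shows "card {c. (i, c) \<in> S} = (if i \<in> fst ` S then 1 else 0)"
proof (cases "i \<in> fst ` S")
  case True
  then obtain c where "(i, c) \<in> S" by force
  with assms have "{c'. (i, c') \<in> S} = {c}" by (fastforce simp: inj_on_def)
  then show ?thesis using True by simp
next
  case False
  then have "{c. (i, c) \<in> S} = {}" by force
  then show ?thesis using False by simp
qed

lemma arc_diagrams_of_type_eq_row_arc_diagrams:
  assumes LR: "LR_tableau \<alpha> \<beta> \<gamma> T" and inj: "inj_on fst (skew_boxes \<beta> \<gamma>)"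
  shows "arc_diagrams_of_type \<alpha> \<beta> \<gamma> T
    = row_arc_diagrams (fst ` {b \<in> skew_boxes \<beta> \<gamma>. T b = 1}) (fst ` {b \<in> skew_boxes \<beta> \<gamma>. T b = 2})"
    (is "_ = row_arc_diagrams ?R1 ?R2")
proof -
  let ?S = "skew_boxes \<beta> \<gamma>"
  have inj_entries: "inj_on fst {b \<in> ?S. T b = k}" for k
    using inj by (rule inj_on_subset) blast
  have entries: "\<forall>b \<in> ?S. T b \<in> {1, 2}"
    and ones: "card {b \<in> ?S. T b = 1} = conj \<alpha> 1" and twos: "card {b \<in> ?S. T b = 2} = conj \<alpha> 2"
    using LR unfolding LR_tableau_def by blast+
  have card_R1: "card ?R1 = conj \<alpha> 1"
    using card_image[OF inj_entries] ones by simp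
  have card_R2: "card ?R2 = conj \<alpha> 2"
    using card_image[OF inj_entries] twos by simp
  have rows: "fst ` ?S = ?R1 \<union> ?R2"
    using entries by force
  have touched: "conj \<beta> i - conj \<gamma> i = (if i \<in> ?R1 \<union> ?R2 then 1 else 0)" if "1 \<le> i" for i
  proof -
    have "conj \<beta> i - conj \<gamma> i = card {c. (i, c) \<in> ?S}"
      using card_skew_boxes_row[OF that] by simp
    also have "\<dots> = (if i \<in> fst ` ?S then 1 else 0)"
      by (rule card_row_if_inj_on_fst[OF inj])
    finally show ?thesis unfolding rows .
  qed
  have two_rows: "card {c. (i, c) \<in> ?S \<and> T (i, c) = 2} = (if i \<in> ?R2 then 1 else 0)" for i
    using card_row_if_inj_on_fst[OF inj_entries[of 2], of i] by simp
  have "(\<forall>i \<ge> 1. size (filter_mset (\<lambda>a. fst a = enat i \<or> snd a = i) D) = conj \<beta> i - conj \<gamma> i)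
    \<longleftrightarrow> (\<forall>i \<ge> 1. size (filter_mset (\<lambda>a. fst a = enat i \<or> snd a = i) D)
                = (if i \<in> ?R1 \<union> ?R2 then 1 else 0))" for D :: "(enat \<times> nat) multiset"
    using touched by auto
  then show ?thesis
    unfolding arc_diagrams_of_type_def arc_diagram_def has_LR_type_def row_arc_diagrams_def
      two_rows card_R1 [symmetric] card_R2 [symmetric]
    by blast
qed

lemma separated_rows_skew_boxes:
  assumes inj: "inj_on fst (skew_boxes \<beta> \<gamma>)"
    and counts: "card {b \<in> skew_boxes \<beta> \<gamma>. T b = 2} = card {b \<in> skew_boxes \<beta> \<gamma>. T b = 1} \<or>
                 card {b \<in> skew_boxes \<beta> \<gamma>. T b = 2} + 1 = card {b \<in> skew_boxes \<beta> \<gamma>. T b = 1}"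
    and twos_below_ones: "\<forall>i j c d. (j, c) \<in> skew_boxes \<beta> \<gamma> \<and> T (j, c) = 2 \<and>
                   (i, d) \<in> skew_boxes \<beta> \<gamma> \<and> T (i, d) = 1 \<longrightarrow> i < j"
  shows "separated_rows (fst ` {b \<in> skew_boxes \<beta> \<gamma>. T b = 1}) (fst ` {b \<in> skew_boxes \<beta> \<gamma>. T b = 2})"
proof
  let ?S = "skew_boxes \<beta> \<gamma>"
  show "finite (fst ` {b \<in> ?S. T b = 1})" "finite (fst ` {b \<in> ?S. T b = 2})"
    by (simp_all add: finite_skew_boxes)
  show "0 \<notin> fst ` {b \<in> ?S. T b = 1} \<union> fst ` {b \<in> ?S. T b = 2}"
    by (auto simp: skew_boxes_def)
  show "r < s" if r: "r \<in> fst ` {b \<in> ?S. T b = 1}" and s: "s \<in> fst ` {b \<in> ?S. T b = 2}" for r s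
  proof -
    obtain d where "(r, d) \<in> ?S" "T (r, d) = 1" using r by force
    moreover obtain c where "(s, c) \<in> ?S" "T (s, c) = 2" using s by force
    ultimately show ?thesis using twos_below_ones by blast
  qed
  have "card (fst ` {b \<in> ?S. T b = k}) = card {b \<in> ?S. T b = k}" for k
    by (rule card_image, rule inj_on_subset[OF inj]) blast
  then show "card (fst ` {b \<in> ?S. T b = 2}) = card (fst ` {b \<in> ?S. T b = 1}) \<or>
      card (fst ` {b \<in> ?S. T b = 2}) + 1 = card (fst ` {b \<in> ?S. T b = 1})"
    using counts by simp
qed

theorem mainTheorem6:
  fixes \<alpha> \<beta> \<gamma> :: "nat list" and T :: "nat \<times> nat \<Rightarrow> nat" and x :: nat
  assumes "partition \<alpha>" and "partition \<beta>" and "partition \<gamma>"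
    and "part \<alpha> 1 \<le> 2"
    and "LR_tableau \<alpha> \<beta> \<gamma> T"
    and "x = card {b \<in> skew_boxes \<beta> \<gamma>. T b = 1}"
    and "card {b \<in> skew_boxes \<beta> \<gamma>. T b = 2} = x \<or>
         card {b \<in> skew_boxes \<beta> \<gamma>. T b = 2} + 1 = x"
    and "\<forall>i. card {c. (i, c) \<in> skew_boxes \<beta> \<gamma>} \<le> 1"
    and "\<forall>i j c d. (j, c) \<in> skew_boxes \<beta> \<gamma> \<and> T (j, c) = 2 \<and>
                   (i, d) \<in> skew_boxes \<beta> \<gamma> \<and> T (i, d) = 1 \<longrightarrow> i < j"
  shows "\<exists>f. bij_betw f (arc_diagrams_of_type \<alpha> \<beta> \<gamma> T) {p. p permutes {1..x}}"
proof -
  let ?R1 = "fst ` {b \<in> skew_boxes \<beta> \<gamma>. T b = 1}"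
  have inj: "inj_on fst (skew_boxes \<beta> \<gamma>)"
    by (rule inj_on_fst_if_card_rows_le_1[OF finite_skew_boxes]) (use assms(8) in blast)
  have "card ?R1 = x"
    using assms(6) by (simp add: card_image[OF inj_on_subset[OF inj]])
  moreover have "separated_rows ?R1 (fst ` {b \<in> skew_boxes \<beta> \<gamma>. T b = 2})"
    using inj assms(7)[unfolded assms(6)] assms(9) by (rule separated_rows_skew_boxes)
  ultimately have "card (arc_diagrams_of_type \<alpha> \<beta> \<gamma> T) = fact x"
    by (simp add: arc_diagrams_of_type_eq_row_arc_diagrams[OF assms(5) inj]
        separated_rows.card_row_arc_diagrams)
  moreover have "card {p. p permutes {1..x}} = fact x"
    by (simp add: card_permutations)
  ultimately show ?thesis
    by (intro finite_same_card_bij) (auto intro: card_ge_0_finite)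
qed

end
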